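(* Let $n,m$ be positive integers and $\mathbf{r}=(r_1,\dots,r_m)$, $\mathbf{s}=(s_1,\dots,s_m)$ sequences of nonnegative integers with sums $r$ and $s$. Then \[ |\mathrm{SB}(n,\mathbf{r},\mathbf{s})| = |\mathrm{SB}^-(n,\mathbf{r},\mathbf{s})| \frac{\left((r+s+1)n+m\binom n2+\sum_{i=1}^m r_is_i\right)!} {\left((r+s+1)n+m\binom n2\right)!}. \]
   Context: For nonnegative integers $p,q$, the $(n,p,q)$-staircase is the set of cells $(i,j)$ (row $i$, column $j$) with $1\le i\le p+n$, $1\le j\le n+q$, $i\le j+p$; the cell $(j+p,j)$ ($1\le j\le n$) is its $j$th diagonal cell (row $i>p$ contains the diagonal cell $(i,i-p)$, column $j\le n$ contains $(j+p,j)$, other rows/columns contain none). The $(n,p,q)^-$-staircase is obtained by removing the cells with $i\le p$ and $j>n$. Take pages $\lambda^{(i)}$ = the $(n,r_i,s_i)$-staircase (resp. $(n,r_i,s_i)^-$-staircase), $1\le i\le m$, identifying the $j$th diagonal cells of all pages for each $j$. An $(n,\mathbf{r},\mathbf{s})$-Selberg book (resp. $(n,\mathbf{r},\mathbf{s})^-$-Selberg book) is a filling of the resulting cells with $1,\dots,N$ where $N=(r+s+1)n+m\binom n2+\sum_i r_is_i$ (resp. $N=(r+s+1)n+m\binom n2$), each used once, such that in each page every non-diagonal cell has entry larger than that of the diagonal cell in its row (if any) and smaller than that of the diagonal cell in its column (if any). $\mathrm{SB}(n,\mathbf{r},\mathbf{s})$ and $\mathrm{SB}^-(n,\mathbf{r},\mathbf{s})$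 denote these sets. *)

theory Defs
  imports Complex_Main
begin

text \<open>Cells of a Selberg book: the shared diagonal cells Diag j (j = 1..n), and the
non-diagonal cells Off i a b of page i (i = 0..m-1), row a, column b.\<close>
datatype cell = Diag nat | Off nat nat nat

definition staircase :: "nat \<Rightarrow> nat \<Rightarrow> nat \<Rightarrow> (nat \<times> nat) set" where
  "staircase n p q = {(a,b). 1 \<le> a \<and> a \<le> p + n \<and> 1 \<le> b \<and> b \<le> n + q \<and> a \<le> b + p}"

definition staircase_minus :: "nat \<Rightarrow> nat \<Rightarrow> nat \<Rightarrow> (nat \<times> nat) set" where
  "staircase_minus n p q = staircase n p q - {(a,b). a \<le> p \<and> n < b}"

definition is_diag :: "nat \<Rightarrow> nat \<Rightarrow> nat \<Rightarrow> nat \<Rightarrow> bool" where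
  "is_diag n p a b \<longleftrightarrow> a = b + p \<and> 1 \<le> b \<and> b \<le> n"

definition book_cells ::
  "(nat \<Rightarrow> (nat \<times> nat) set) \<Rightarrow> nat \<Rightarrow> nat list \<Rightarrow> cell set" where
  "book_cells pg n r =
     Diag ` {1..n} \<union>
     {Off i a b | i a b. i < length r \<and> (a,b) \<in> pg i \<and> \<not> is_diag n (r!i) a b}"

definition book_cond ::
  "(nat \<Rightarrow> (nat \<times> nat) set) \<Rightarrow> nat \<Rightarrow> nat list \<Rightarrow> (cell \<Rightarrow> nat) \<Rightarrow> bool" where
  "book_cond pg n r f \<longleftrightarrow>
     (\<forall>i a b. i < length r \<and> (a,b) \<in> pg i \<and> \<not> is_diag n (r!i) a b \<longrightarrow>
        (r!i < a \<longrightarrow> f (Diag (a - r!i)) < f (Off i a b)) \<and>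
        (b \<le> n \<longrightarrow> f (Off i a b) < f (Diag b)))"

definition book_fillings ::
  "(nat \<Rightarrow> (nat \<times> nat) set) \<Rightarrow> nat \<Rightarrow> nat list \<Rightarrow> nat \<Rightarrow> (cell \<Rightarrow> nat) set" where
  "book_fillings pg n r N =
     {f. bij_betw f (book_cells pg n r) {1..N} \<and>
         (\<forall>x. x \<notin> book_cells pg n r \<longrightarrow> f x = 0) \<and>
         book_cond pg n r f}"

definition SB_N :: "nat \<Rightarrow> nat list \<Rightarrow> nat list \<Rightarrow> nat" where
  "SB_N n r s = (sum_list r + sum_list s + 1) * n + length r * (n choose 2)
                 + (\<Sum>i<length r. r!i * s!i)"

definition SBm_N :: "nat \<Rightarrow> nat list \<Rightarrow> nat list \<Rightarrow> nat" where
  "SBm_N n r s = (sum_list r + sum_list s + 1) * n + length r * (n choose 2)"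

definition SB :: "nat \<Rightarrow> nat list \<Rightarrow> nat list \<Rightarrow> (cell \<Rightarrow> nat) set" where
  "SB n r s = book_fillings (\<lambda>i. staircase n (r!i) (s!i)) n r (SB_N n r s)"

definition SB_minus :: "nat \<Rightarrow> nat list \<Rightarrow> nat list \<Rightarrow> (cell \<Rightarrow> nat) set" where
  "SB_minus n r s = book_fillings (\<lambda>i. staircase_minus n (r!i) (s!i)) n r (SBm_N n r s)"

end

theory Submission
  imports Defs "HOL-Library.FuncSet" "HOL-Library.Infinite_Set"
begin

text \<open>The cells of page i in rows 1..r_i and columns beyond n share neither a row nor a
column with a diagonal cell, so the Selberg conditions never mention them. A filling in
SB is therefore an injective choice of the K = \<Sum> r_i s_i entries of these corner cells,
followed by a filling of the remaining cells with the remaining N - K values. The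
conditions only compare entries, so relabelling these values increasingly by 1..N-K is
a bijection onto SB^-.\<close>

definition fillings :: "'a set \<Rightarrow> nat set \<Rightarrow> (('a \<Rightarrow> nat) \<Rightarrow> bool) \<Rightarrow> ('a \<Rightarrow> nat) set" where
  "fillings A T P = {f. bij_betw f A T \<and> (\<forall>x. x \<notin> A \<longrightarrow> f x = 0) \<and> P f}"

definition order_invariant_on :: "'a set \<Rightarrow> (('a \<Rightarrow> nat) \<Rightarrow> bool) \<Rightarrow> bool" where
  "order_invariant_on A P \<longleftrightarrow>
     (\<forall>f g. (\<forall>x\<in>A. \<forall>y\<in>A. f x < f y \<longleftrightarrow> g x < g y) \<longrightarrow> P f = P g)"

lemma finite_fillings:
  assumes "finite A" "finite T"
  shows "finite (fillings A T P)"
proof -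
  have "fillings A T P \<subseteq> (\<lambda>\<phi> x. if x \<in> A then \<phi> x else 0) ` (A \<rightarrow>\<^sub>E T)"
  proof
    fix f assume f: "f \<in> fillings A T P"
    then have "f = (\<lambda>x. if x \<in> A then restrict f A x else 0)"
      by (auto simp: fillings_def fun_eq_iff)
    moreover have "restrict f A \<in> A \<rightarrow>\<^sub>E T"
      using f by (auto simp: fillings_def bij_betw_def)
    ultimately show "f \<in> (\<lambda>\<phi> x. if x \<in> A then \<phi> x else 0) ` (A \<rightarrow>\<^sub>E T)" by blast
  qed
  then show ?thesis
    using assms by (meson finite_PiE finite_imageI finite_subset)
qed

definition relabel :: "('b \<Rightarrow> nat) \<Rightarrow> 'a set \<Rightarrow> ('a \<Rightarrow> 'b) \<Rightarrow> 'a \<Rightarrow> nat" where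
  "relabel e A f = (\<lambda>x. if x \<in> A then e (f x) else 0)"

lemma relabel_mem_fillings_iff:
  assumes e: "bij_betw e T S" "strict_mono_on T e" and P: "order_invariant_on A P"
    and f: "f ` A \<subseteq> T" "\<forall>x. x \<notin> A \<longrightarrow> f x = 0"
  shows "relabel e A f \<in> fillings A S P \<longleftrightarrow> f \<in> fillings A T P"
proof -
  have "bij_betw (relabel e A f) A S \<longleftrightarrow> bij_betw (e \<circ> f) A S"
    by (intro bij_betw_cong) (simp add: relabel_def)
  also have "\<dots> \<longleftrightarrow> bij_betw f A T"
    using bij_betw_comp_iff2[OF e(1) f(1)] by simp
  finally have "bij_betw (relabel e A f) A S \<longleftrightarrow> bij_betw f A T" .
  moreover have "P (relabel e A f) = P f"
    using P f(1) strict_mono_on_less[OF e(2)]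
    unfolding order_invariant_on_def relabel_def by (smt (verit) image_subset_iff)
  ultimately show ?thesis
    using f(2) by (simp add: fillings_def relabel_def)
qed

lemma card_fillings_relabel:
  assumes e: "bij_betw e T S" "strict_mono_on T e" and P: "order_invariant_on A P"
  shows "card (fillings A S P) = card (fillings A T P)"
proof -
  let ?e' = "inv_into T e"
  have "bij_betw (relabel e A) (fillings A T P) (fillings A S P)"
  proof (rule bij_betw_byWitness[where f' = "relabel ?e' A"])
    show "\<forall>f\<in>fillings A T P. relabel ?e' A (relabel e A f) = f"
      using e(1) by (auto simp: fillings_def relabel_def fun_eq_iff bij_betw_def
                          intro: inv_into_f_f)
    show "\<forall>f\<in>fillings A S P. relabel e A (relabel ?e' A f) = f"
      using e(1) by (auto simp: fillings_def relabel_def fun_eq_iff bij_betw_def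
                          intro!: f_inv_into_f)
    show "relabel e A ` fillings A T P \<subseteq> fillings A S P"
    proof (rule image_subsetI)
      fix f assume f: "f \<in> fillings A T P"
      then have "f ` A \<subseteq> T" "\<forall>x. x \<notin> A \<longrightarrow> f x = 0"
        by (auto simp: fillings_def bij_betw_def)
      then show "relabel e A f \<in> fillings A S P"
        using relabel_mem_fillings_iff[OF e P] f by blast
    qed
    show "relabel ?e' A ` fillings A S P \<subseteq> fillings A T P"
    proof
      fix f assume "f \<in> relabel ?e' A ` fillings A S P"
      then obtain h where h: "h \<in> fillings A S P" "f = relabel ?e' A h" by blast
      have "f ` A \<subseteq> T" "\<forall>x. x \<notin> A \<longrightarrow> f x = 0"
        using h e(1) by (auto simp: fillings_def relabel_def bij_betw_def intro!: inv_into_into)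
      moreover have "relabel e A f = h"
        using h e(1) by (auto simp: fillings_def relabel_def fun_eq_iff bij_betw_def
                          intro!: f_inv_into_f)
      ultimately show "f \<in> fillings A T P"
        using relabel_mem_fillings_iff[OF e P] h(1) by blast
    qed
  qed
  then show ?thesis by (simp add: bij_betw_same_card)
qed

lemma card_fillings_eq_if_card_eq:
  assumes "finite S" "finite T" "card S = card T" and P: "order_invariant_on A P"
  shows "card (fillings A S P) = card (fillings A T P)"
proof -
  have enum: "card (fillings A U P) = card (fillings A {..<card U} P)" if "finite U" for U :: "nat set"
    using that finite_bij_enumerate[OF that] finite_enumerate_mono[OF _ that]
    by (intro card_fillings_relabel[OF _ _ P]) (auto intro: strict_mono_onI)
  show ?thesis
    using enum[of S] enum[of T] assms by simp
qed

lemma bij_betw_fillings_fiber: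
  assumes CF: "C \<inter> F = {}" and g: "inj_on g F" "g ` F \<subseteq> T" and P: "order_invariant_on C P"
  shows "bij_betw (\<lambda>f x. if x \<in> C then f x else 0)
           {f \<in> fillings (C \<union> F) T P. \<forall>x\<in>F. f x = g x} (fillings C (T - g ` F) P)"
proof (rule bij_betw_byWitness[where f' = "\<lambda>h x. if x \<in> F then g x else h x"])
  have P_restrict: "P (\<lambda>x. if x \<in> C then f x else 0) = P f" for f
    using P unfolding order_invariant_on_def by simp
  have P_extend: "P (\<lambda>x. if x \<in> F then g x else h x) = P h" for h
    using P CF unfolding order_invariant_on_def by (smt (verit) disjoint_iff)
  show "\<forall>f\<in>{f \<in> fillings (C \<union> F) T P. \<forall>x\<in>F. f x = g x}.
          (\<lambda>x. if x \<in> F then g x else if x \<in> C then f x else 0) = f"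
    by (auto simp: fillings_def fun_eq_iff)
  show "\<forall>h\<in>fillings C (T - g ` F) P. (\<lambda>x. if x \<in> C then if x \<in> F then g x else h x else 0) = h"
    using CF by (auto simp: fillings_def fun_eq_iff)
  show "(\<lambda>f x. if x \<in> C then f x else 0) ` {f \<in> fillings (C \<union> F) T P. \<forall>x\<in>F. f x = g x}
          \<subseteq> fillings C (T - g ` F) P"
  proof (rule image_subsetI)
    fix f assume f: "f \<in> {f \<in> fillings (C \<union> F) T P. \<forall>x\<in>F. f x = g x}"
    then have bij: "bij_betw f (C \<union> F) T" and fg: "f ` F = g ` F"
      by (auto simp: fillings_def)
    have "f ` C = f ` (C \<union> F) - f ` F"
      using bij CF by (auto simp: bij_betw_def inj_on_def)
    then have "f ` C = T - g ` F"
      using bij fg by (simp add: bij_betw_def)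
    then have "bij_betw (\<lambda>x. if x \<in> C then f x else 0) C (T - g ` F)"
      using bij by (auto simp: bij_betw_def inj_on_def)
    then show "(\<lambda>x. if x \<in> C then f x else 0) \<in> fillings C (T - g ` F) P"
      using f P_restrict by (simp add: fillings_def)
  qed
  show "(\<lambda>h x. if x \<in> F then g x else h x) ` fillings C (T - g ` F) P
          \<subseteq> {f \<in> fillings (C \<union> F) T P. \<forall>x\<in>F. f x = g x}"
  proof (rule image_subsetI)
    fix h assume h: "h \<in> fillings C (T - g ` F) P"
    let ?f = "\<lambda>x. if x \<in> F then g x else h x"
    have "bij_betw ?f C (T - g ` F) \<longleftrightarrow> bij_betw h C (T - g ` F)"
      using CF by (intro bij_betw_cong) auto
    then have "bij_betw ?f C (T - g ` F)"
      using h by (simp add: fillings_def)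
    moreover have "bij_betw ?f F (g ` F)"
      using g(1) by (simp add: bij_betw_def inj_on_def)
    ultimately have "bij_betw ?f (C \<union> F) (T - g ` F \<union> g ` F)"
      by (rule bij_betw_combine) blast
    moreover have "T - g ` F \<union> g ` F = T"
      using g(2) by blast
    ultimately show "?f \<in> {f \<in> fillings (C \<union> F) T P. \<forall>x\<in>F. f x = g x}"
      using h P_extend by (auto simp: fillings_def)
  qed
qed

lemma card_fillings_Un_free:
  assumes fin: "finite C" "finite F" "finite T" and CF: "C \<inter> F = {}"
    and P: "order_invariant_on C P"
  shows "card (fillings (C \<union> F) T P) =
         card {g \<in> F \<rightarrow>\<^sub>E T. inj_on g F} * card (fillings C {1..card T - card F} P)"
proof -
  define G where "G = {g \<in> F \<rightarrow>\<^sub>E T. inj_on g F}"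
  define fiber where "fiber g = {f \<in> fillings (C \<union> F) T P. \<forall>x\<in>F. f x = g x}" for g
  have partition: "fillings (C \<union> F) T P = (\<Union>g\<in>G. fiber g)"
  proof (intro equalityI subsetI)
    fix f assume f: "f \<in> fillings (C \<union> F) T P"
    then have "restrict f F \<in> G"
      unfolding G_def fillings_def bij_betw_def inj_on_def by auto
    moreover have "f \<in> fiber (restrict f F)"
      using f by (simp add: fiber_def)
    ultimately show "f \<in> (\<Union>g\<in>G. fiber g)" by blast
  qed (auto simp: fiber_def)
  have disjoint: "fiber g1 \<inter> fiber g2 = {}" if g: "g1 \<in> G" "g2 \<in> G" and ne: "g1 \<noteq> g2" for g1 g2
  proof -
    obtain x where "x \<in> F" "g1 x \<noteq> g2 x"
      using g ne unfolding G_def by (metis (mono_tags, lifting) PiE_ext mem_Collect_eq)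
    then show ?thesis by (auto simp: fiber_def)
  qed
  have card_fiber: "card (fiber g) = card (fillings C {1..card T - card F} P)" if "g \<in> G" for g
  proof -
    have g: "inj_on g F" "g ` F \<subseteq> T"
      using that by (auto simp: G_def)
    then have "card (T - g ` F) = card {1..card T - card F}"
      using fin by (simp add: card_Diff_subset card_image)
    then have "card (fillings C (T - g ` F) P) = card (fillings C {1..card T - card F} P)"
      using fin P by (intro card_fillings_eq_if_card_eq) auto
    moreover have "card (fiber g) = card (fillings C (T - g ` F) P)"
      unfolding fiber_def using bij_betw_fillings_fiber[OF CF g P] by (rule bij_betw_same_card)
    ultimately show ?thesis by simp
  qed
  have "finite G"
    using fin by (simp add: G_def finite_PiE)
  moreover have "finite (fiber g)" for g
    using fin finite_fillings[of "C \<union> F" T P] by (simp add: fiber_def)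
  ultimately have "card (fillings (C \<union> F) T P) = (\<Sum>g\<in>G. card (fiber g))"
    unfolding partition using disjoint by (intro card_UN_disjoint) auto
  also have "\<dots> = card G * card (fillings C {1..card T - card F} P)"
    using card_fiber by simp
  finally show ?thesis by (simp add: G_def)
qed

lemma card_inj_funcset_mult_fact:
  assumes "finite A" "finite B" "card A \<le> card B"
  shows "card {f \<in> A \<rightarrow>\<^sub>E B. inj_on f A} * fact (card B - card A) = fact (card B)"
proof -
  have "card {f \<in> A \<rightarrow>\<^sub>E B. inj_on f A} = prod ((-) (card B)) {0..<card A}"
    using card_inj_on_subset_funcset[OF assms(1,2) subset_refl] by simp
  also have "\<dots> = \<Prod>{Suc (card B - card A)..card B}"
    using assms(3) by (intro prod.reindex_bij_witness[of _ "\<lambda>i. card B - i" "\<lambda>i. card B - i"]) auto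
  finally show ?thesis
    using fact_eq_fact_times[of "card B - card A" "card B"] by simp
qed

lemma book_fillings_eq_fillings:
  "book_fillings pg n r N = fillings (book_cells pg n r) {1..N} (book_cond pg n r)"
  by (simp add: book_fillings_def fillings_def)

lemma Diag_mem_book_cells_iff: "Diag j \<in> book_cells pg n r \<longleftrightarrow> j \<in> {1..n}"
  unfolding book_cells_def by blast

lemma Off_mem_book_cells_iff:
  "Off i a b \<in> book_cells pg n r \<longleftrightarrow> i < length r \<and> (a,b) \<in> pg i \<and> \<not> is_diag n (r!i) a b"
  unfolding book_cells_def by blast

lemma finite_book_cells:
  assumes "\<And>i. i < length r \<Longrightarrow> finite (pg i)"
  shows "finite (book_cells pg n r)"
proof (rule finite_subset)
  show "book_cells pg n r \<subseteq> Diag ` {1..n} \<union> (\<lambda>(i,a,b). Off i a b) ` (SIGMA i:{..<length r}. pg i)"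
  proof
    fix x assume "x \<in> book_cells pg n r"
    then consider "x \<in> Diag ` {1..n}" | i a b where "x = Off i a b" "i < length r" "(a,b) \<in> pg i"
      unfolding book_cells_def by blast
    then show "x \<in> Diag ` {1..n} \<union> (\<lambda>(i,a,b). Off i a b) ` (SIGMA i:{..<length r}. pg i)"
    proof cases
      case (2 i a b)
      then show ?thesis by (intro UnI2 image_eqI[where x = "(i,a,b)"]) auto
    qed blast
  qed
  show "finite (Diag ` {1..n} \<union> (\<lambda>(i,a,b). Off i a b) ` (SIGMA i:{..<length r}. pg i))"
    using assms by auto
qed

lemma finite_staircase_minus: "finite (staircase_minus n p q)"
proof -
  have "staircase_minus n p q \<subseteq> {1..p + n} \<times> {1..n + q}"
    unfolding staircase_minus_def staircase_def by auto
  then show ?thesis by (rule finite_subset) simp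
qed

lemma order_invariant_book_cond:
  assumes "\<And>i. i < length r \<Longrightarrow> pg i \<subseteq> staircase n (r!i) (q i)"
  shows "order_invariant_on (book_cells pg n r) (book_cond pg n r)"
  unfolding order_invariant_on_def
proof (intro allI impI)
  fix f g :: "cell \<Rightarrow> nat"
  assume same_order: "\<forall>x\<in>book_cells pg n r. \<forall>y\<in>book_cells pg n r. f x < f y \<longleftrightarrow> g x < g y"
  have row_diag: "Diag (a - r!i) \<in> book_cells pg n r"
    if "i < length r" "(a,b) \<in> pg i" "r!i < a" for i a b
    using that assms[of i] by (auto simp: Diag_mem_book_cells_iff staircase_def)
  have col_diag: "Diag b \<in> book_cells pg n r"
    if "i < length r" "(a,b) \<in> pg i" "b \<le> n" for i a b
    using that assms[of i] by (auto simp: Diag_mem_book_cells_iff staircase_def)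
  show "book_cond pg n r f = book_cond pg n r g"
    unfolding book_cond_def
    using same_order row_diag col_diag Off_mem_book_cells_iff by (smt (verit))
qed

definition corner_cells :: "nat \<Rightarrow> nat list \<Rightarrow> nat list \<Rightarrow> cell set" where
  "corner_cells n r s =
     (\<lambda>(i,a,b). Off i a b) ` (SIGMA i:{..<length r}. {1..r!i} \<times> {n+1..n+s!i})"

lemma Diag_notin_corner_cells: "Diag j \<notin> corner_cells n r s"
  unfolding corner_cells_def by auto

lemma Off_mem_corner_cells_iff:
  "Off i a b \<in> corner_cells n r s \<longleftrightarrow> i < length r \<and> 1 \<le> a \<and> a \<le> r!i \<and> n < b \<and> b \<le> n + s!i"
  unfolding corner_cells_def by force

lemma finite_corner_cells: "finite (corner_cells n r s)"
  unfolding corner_cells_def by auto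

lemma card_corner_cells: "card (corner_cells n r s) = (\<Sum>i<length r. r!i * s!i)"
proof -
  let ?I = "SIGMA i:{..<length r}. {1..r!i} \<times> {n+1..n+s!i}"
  have "inj_on (\<lambda>(i,a,b). Off i a b) ?I"
    by (auto simp: inj_on_def)
  then have "card (corner_cells n r s) = card ?I"
    unfolding corner_cells_def by (rule card_image)
  also have "\<dots> = (\<Sum>i<length r. card ({1..r!i} \<times> {n+1..n+s!i}))"
    by (rule card_SigmaI) auto
  finally show ?thesis
    by (simp add: card_cartesian_product)
qed

lemma book_cells_staircase_eq:
  "book_cells (\<lambda>i. staircase n (r!i) (s!i)) n r =
   book_cells (\<lambda>i. staircase_minus n (r!i) (s!i)) n r \<union> corner_cells n r s"
proof (rule set_eqI)
  fix x show "x \<in> book_cells (\<lambda>i. staircase n (r!i) (s!i)) n r \<longleftrightarrow>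
              x \<in> book_cells (\<lambda>i. staircase_minus n (r!i) (s!i)) n r \<union> corner_cells n r s"
    by (cases x) (auto simp: Diag_mem_book_cells_iff Off_mem_book_cells_iff Diag_notin_corner_cells
                             Off_mem_corner_cells_iff staircase_minus_def staircase_def is_diag_def)
qed

lemma book_cells_staircase_minus_Int_corner_cells:
  "book_cells (\<lambda>i. staircase_minus n (r!i) (s!i)) n r \<inter> corner_cells n r s = {}"
proof (rule equals0I)
  fix x assume "x \<in> book_cells (\<lambda>i. staircase_minus n (r!i) (s!i)) n r \<inter> corner_cells n r s"
  then show False
    by (cases x) (auto simp: Off_mem_book_cells_iff Diag_notin_corner_cells Off_mem_corner_cells_iff
                             staircase_minus_def)
qed

lemma book_cond_staircase_eq_minus:
  "book_cond (\<lambda>i. staircase n (r!i) (s!i)) n r = book_cond (\<lambda>i. staircase_minus n (r!i) (s!i)) n r"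
  unfolding book_cond_def staircase_minus_def by (intro ext iffI allI impI) auto

lemma card_SB_eq_injections_mult_card_SB_minus:
  "card (SB n r s) =
   card {g \<in> corner_cells n r s \<rightarrow>\<^sub>E {1..SB_N n r s}. inj_on g (corner_cells n r s)} *
   card (SB_minus n r s)"
proof -
  let ?pg = "\<lambda>i. staircase_minus n (r!i) (s!i)"
  define C where "C = book_cells ?pg n r"
  define F where "F = corner_cells n r s"
  have fin: "finite C" "finite F"
    by (simp_all add: C_def F_def finite_book_cells finite_staircase_minus finite_corner_cells)
  have "SB n r s = fillings (C \<union> F) {1..SB_N n r s} (book_cond ?pg n r)"
    by (simp add: SB_def book_fillings_eq_fillings book_cells_staircase_eq
                  book_cond_staircase_eq_minus C_def F_def)
  also have "card \<dots> = card {g \<in> F \<rightarrow>\<^sub>E {1..SB_N n r s}. inj_on g F} *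
                      card (fillings C {1..card {1..SB_N n r s} - card F} (book_cond ?pg n r))"
  proof (rule card_fillings_Un_free[OF fin finite_atLeastAtMost])
    show "C \<inter> F = {}"
      by (simp add: C_def F_def book_cells_staircase_minus_Int_corner_cells)
    show "order_invariant_on C (book_cond ?pg n r)"
      unfolding C_def by (rule order_invariant_book_cond) (auto simp: staircase_minus_def)
  qed
  also have "fillings C {1..card {1..SB_N n r s} - card F} (book_cond ?pg n r) = SB_minus n r s"
    by (simp add: SB_minus_def book_fillings_eq_fillings C_def F_def SB_N_def SBm_N_def
                  card_corner_cells)
  finally show ?thesis
    by (simp add: F_def)
qed

theorem proposition4p4:
  fixes n :: nat and r s :: "nat list"
  assumes "0 < n" and "0 < length r" and "length s = length r"
  shows "real (card (SB n r s)) =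
         real (card (SB_minus n r s)) *
         fact ((sum_list r + sum_list s + 1) * n + length r * (n choose 2) + (\<Sum>i<length r. r!i * s!i))
         / fact ((sum_list r + sum_list s + 1) * n + length r * (n choose 2))"
proof -
  define F where "F = corner_cells n r s"
  define injections where "injections = {g \<in> F \<rightarrow>\<^sub>E {1..SB_N n r s}. inj_on g F}"
  have "SB_N n r s = SBm_N n r s + card F"
    by (simp add: F_def SB_N_def SBm_N_def card_corner_cells)
  then have injections_fact: "card injections * fact (SBm_N n r s) = (fact (SB_N n r s) :: nat)"
    using card_inj_funcset_mult_fact[of F "{1..SB_N n r s}"]
    by (simp add: injections_def F_def finite_corner_cells)
  have "real (card (SB n r s)) * fact (SBm_N n r s) =
        real (card (SB_minus n r s)) * real (card injections * fact (SBm_N n r s))"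
    by (simp add: card_SB_eq_injections_mult_card_SB_minus injections_def F_def mult_ac)
  also have "\<dots> = real (card (SB_minus n r s)) * fact (SB_N n r s)"
    by (simp only: injections_fact of_nat_fact)
  finally have "real (card (SB n r s)) =
                real (card (SB_minus n r s)) * fact (SB_N n r s) / fact (SBm_N n r s)"
    by (simp add: eq_divide_eq)
  then show ?thesis
    unfolding SB_N_def SBm_N_def .
qed

end
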